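(* Let $(\mathcal U,\mathcal F)$ be a strongly accessible set system satisfying the commutable property, let $S$ be a nonempty maximal solution with layered canonical order $s_1,\dots,s_{|S|}$, and let $1\le j\le |S|$. Then $T=\mathrm{complete}'(S[j],\mathcal U)$ is a maximal solution and $T\preceq' S$.
   Context: A set system is $(\mathcal U,\mathcal F)$ with $\mathcal U$ finite, $\mathcal F\subseteq 2^{\mathcal U}$, $\emptyset\in\mathcal F$; $S\in\mathcal F$ is maximal if no $Y\in\mathcal F$ has $S\subsetneq Y$. Strongly accessible: for all $X,Y\in\mathcal F$ with $X\subsetneq Y$ there is $z\in Y\setminus X$ with $X\cup\{z\}\in\mathcal F$. Commutable property: for all $X,Y\in\mathcal F$ with $X\ne\emptyset$, $X\subsetneq Y$, and $a,b\in Y\setminus X$, if $X\cup\{a\},X\cup\{b\}\in\mathcal F$ then $X\cup\{a,b\}\in\mathcal F$. Elements of $\mathcal U$ are distinct integers. For $X,A\subseteq\mathcal U$, $X^+_A=\{a\in A\setminus X: X\cup\{a\}\in\mathcal F\}$ and $X^+=X^+_{\mathcal U}$. $Z=\{x:\{x\}\in\mathcal F\}$, $\mathrm{source}(X)=\min(X\cap Z)$. Layers: for $X\in\mathcal F$ and $t\in X\cap Z$, set $B_0=\{t\}$ and $B_i=B_{i-1}\cup(B_{i-1}^+\cap X)$ for $i>0$; for $y\in X\cup X^+$ define $\mathrm{lay}^X_t(t)=0$ and, for $y\neq t$, $\mathrm{lay}^X_t(y)=\min\{i\ge1: y\in B_{i-1}^+\}$; write $\mathrm{lay}^X=\mathrm{lay}^X_{\mathrm{source}(X)}$.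 For nonempty $X\in\mathcal F$ and $A\subseteq\mathcal U$ with $X^+_A\ne\emptyset$, $\mathrm{choose}'(X,A)$ is the $y\in X^+_A$ minimizing the pair $(\mathrm{lay}^X(y),y)$ lexicographically. $\mathrm{complete}'(X,A)$: while $X^+_A\neq\emptyset$ replace $X$ by $X\cup\{\mathrm{choose}'(X,A)\}$; return $X$. The layered canonical order of a nonempty maximal $S$ is $s_1=\mathrm{source}(S)$, $s_{i+1}=\mathrm{choose}'(S[i],S)$ while $S[i]^+_S\ne\emptyset$, where $S[i]=\{s_1,\dots,s_i\}$. For maximal $S\neq T$ with layered canonical orders $(s_i),(t_i)$, let $j$ be the smallest index where the pairs $(\mathrm{lay}^S_{s_1}(s_j),s_j)$ and $(\mathrm{lay}^T_{t_1}(t_j),t_j)$ differ; $S\prec' T$ iff the former pair is lexicographically smaller; $S\preceq' T$ iff $S\prec'T$ or $S=T$. *)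

theory Defs
  imports Main "HOL-Library.While_Combinator"
begin

definition set_system :: "int set \<Rightarrow> int set set \<Rightarrow> bool" where
  "set_system U F \<longleftrightarrow> finite U \<and> F \<subseteq> Pow U \<and> {} \<in> F"

definition maximal_sol :: "int set set \<Rightarrow> int set \<Rightarrow> bool" where
  "maximal_sol F S \<longleftrightarrow> S \<in> F \<and> \<not> (\<exists>Y\<in>F. S \<subset> Y)"

definition strongly_accessible :: "int set set \<Rightarrow> bool" where
  "strongly_accessible F \<longleftrightarrow>
     (\<forall>X\<in>F. \<forall>Y\<in>F. X \<subset> Y \<longrightarrow> (\<exists>z\<in>Y - X. insert z X \<in> F))"

definition commutable :: "int set set \<Rightarrow> bool" where
  "commutable F \<longleftrightarrow>
     (\<forall>X\<in>F. \<forall>Y\<in>F. X \<noteq> {} \<longrightarrow> X \<subset> Y \<longrightarrow>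
        (\<forall>a\<in>Y - X. \<forall>b\<in>Y - X. insert a X \<in> F \<longrightarrow> insert b X \<in> F \<longrightarrow> X \<union> {a, b} \<in> F))"

definition ext :: "int set set \<Rightarrow> int set \<Rightarrow> int set \<Rightarrow> int set" where
  "ext F X A = {a \<in> A - X. insert a X \<in> F}"

definition singles :: "int set set \<Rightarrow> int set" where
  "singles F = {x. {x} \<in> F}"

definition source :: "int set set \<Rightarrow> int set \<Rightarrow> int" where
  "source F X = Min (X \<inter> singles F)"

fun layerB :: "int set \<Rightarrow> int set set \<Rightarrow> int set \<Rightarrow> int \<Rightarrow> nat \<Rightarrow> int set" where
  "layerB U F X t 0 = {t}"
| "layerB U F X t (Suc i) = layerB U F X t i \<union> (ext F (layerB U F X t i) U \<inter> X)"

definition lay_t :: "int set \<Rightarrow> int set set \<Rightarrow> int set \<Rightarrow> int \<Rightarrow> int \<Rightarrow> nat" where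
  "lay_t U F X t y = (if y = t then 0
      else (LEAST i. 1 \<le> i \<and> y \<in> ext F (layerB U F X t (i - 1)) U))"

definition lay :: "int set \<Rightarrow> int set set \<Rightarrow> int set \<Rightarrow> int \<Rightarrow> nat" where
  "lay U F X y = lay_t U F X (source F X) y"

definition lexless :: "nat \<times> int \<Rightarrow> nat \<times> int \<Rightarrow> bool" where
  "lexless p q \<longleftrightarrow> fst p < fst q \<or> (fst p = fst q \<and> snd p < snd q)"

definition choose' :: "int set \<Rightarrow> int set set \<Rightarrow> int set \<Rightarrow> int set \<Rightarrow> int" where
  "choose' U F X A = (THE y. y \<in> ext F X A \<and>
      (\<forall>z\<in>ext F X A. z \<noteq> y \<longrightarrow> lexless (lay U F X y, y) (lay U F X z, z)))"

definition complete' :: "int set \<Rightarrow> int set set \<Rightarrow> int set \<Rightarrow> int set \<Rightarrow> int set" where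
  "complete' U F X A = while (\<lambda>X. ext F X A \<noteq> {}) (\<lambda>X. insert (choose' U F X A) X) X"

fun canon_prefix :: "int set \<Rightarrow> int set set \<Rightarrow> int set \<Rightarrow> nat \<Rightarrow> int list" where
  "canon_prefix U F S 0 = []"
| "canon_prefix U F S (Suc 0) = [source F S]"
| "canon_prefix U F S (Suc (Suc n)) =
     (let L = canon_prefix U F S (Suc n) in
      if ext F (set L) S = {} then L else L @ [choose' U F (set L) S])"

text \<open>Layered canonical order s_1,...,s_|S| (list index i-1 holds s_i).\<close>
definition canon_order :: "int set \<Rightarrow> int set set \<Rightarrow> int set \<Rightarrow> int list" where
  "canon_order U F S = canon_prefix U F S (card S)"

definition prefix_set :: "int set \<Rightarrow> int set set \<Rightarrow> int set \<Rightarrow> nat \<Rightarrow> int set" where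
  "prefix_set U F S j = set (take j (canon_order U F S))"

definition ord_pair :: "int set \<Rightarrow> int set set \<Rightarrow> int set \<Rightarrow> nat \<Rightarrow> nat \<times> int" where
  "ord_pair U F S i = (let s = canon_order U F S in
      (lay_t U F S (s ! 0) (s ! i), s ! i))"

definition prec' :: "int set \<Rightarrow> int set set \<Rightarrow> int set \<Rightarrow> int set \<Rightarrow> bool" where
  "prec' U F S T \<longleftrightarrow> S \<noteq> T \<and>
     (\<exists>j < min (length (canon_order U F S)) (length (canon_order U F T)).
        (\<forall>i<j. ord_pair U F S i = ord_pair U F T i) \<and>
        lexless (ord_pair U F S j) (ord_pair U F T j))"

definition preceq' :: "int set \<Rightarrow> int set set \<Rightarrow> int set \<Rightarrow> int set \<Rightarrow> bool" where
  "preceq' U F S T \<longleftrightarrow> prec' U F S T \<or> S = T"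

end

(*
  Along the layered canonical order, each s_{i+1} is the element minimising the key
  (layer, element) among the extensions of the prefix S[i], and its layer in S coincides with its
  layer in S[i]; so prec' compares the greedy keys. Let k be the first position where the orders
  of T = complete'(S[j]) and S differ and W the common prefix. If s_{k+1} lies in T, then T chose
  an element with key at most that of s_{k+1}. Otherwise k >= j, so the completion starts inside
  W and has to leave it; at the step where it first leaves W it picks an element whose layer is at
  most that of s_{k+1}, and this element also extends W with no larger layer.

  Every comparison of layers rests on one consequence of the commutable property: if y extends a
  nonempty A in F inside some Z in F, then y extends every B in F with A <= B <= Z. Hence the
  layers of nested sets can be compared stage by stage.
*)

theory Submission
  imports Defs "HOL-Library.Product_Lexorder"
begin

lemma lexless_iff: "lexless p q \<longleftrightarrow> p < q"
  by (cases p; cases q) (auto simp: lexless_def)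

lemma finite_ext: "finite A \<Longrightarrow> finite (ext F X A)"
  by (rule finite_subset[of _ A]) (auto simp: ext_def)

lemma source_le: "finite X \<Longrightarrow> x \<in> X \<Longrightarrow> {x} \<in> F \<Longrightarrow> source F X \<le> x"
  unfolding source_def singles_def by (rule Min_le) auto

lemma source_subset:
  assumes "finite W" "X \<subseteq> W" "source F W \<in> X" "{source F W} \<in> F"
  shows "source F X = source F W"
proof -
  have "source F W \<in> X \<inter> singles F" using assms(3,4) by (simp add: singles_def)
  moreover have "finite (X \<inter> singles F)" using assms(1,2) finite_subset by blast
  ultimately have "source F X \<le> source F W" "source F X \<in> W \<inter> singles F"
    using assms(2) Min_in[of "X \<inter> singles F"] unfolding source_def by (auto intro: Min_le)
  moreover have "source F W \<le> source F X"
    using calculation(2) assms(1) unfolding source_def by (auto intro: Min_le)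
  ultimately show ?thesis by simp
qed

lemma layerB_mono: "i \<le> k \<Longrightarrow> layerB U F X t i \<subseteq> layerB U F X t k"
  by (rule lift_Suc_mono_le[of "layerB U F X t"]) auto

lemma start_in_layerB: "t \<in> layerB U F X t i"
  using layerB_mono[of 0 i] by auto

lemma layerB_subset: "t \<in> X \<Longrightarrow> layerB U F X t i \<subseteq> X"
  by (induction i) auto

lemma lay_t_le: "y \<noteq> t \<Longrightarrow> 1 \<le> i \<Longrightarrow> y \<in> ext F (layerB U F X t (i - 1)) U \<Longrightarrow> lay_t U F X t y \<le> i"
  unfolding lay_t_def by (auto intro: Least_le)

lemma lay_t_LeastI:
  assumes "y \<noteq> t" "1 \<le> i" "y \<in> ext F (layerB U F X t (i - 1)) U"
  shows "1 \<le> lay_t U F X t y \<and> y \<in> ext F (layerB U F X t (lay_t U F X t y - 1)) U"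
  using assms LeastI[of "\<lambda>i. 1 \<le> i \<and> y \<in> ext F (layerB U F X t (i - 1)) U" i]
  unfolding lay_t_def by auto

lemma layerB_entered:
  "y \<in> layerB U F X t q \<Longrightarrow> y \<noteq> t \<Longrightarrow> \<exists>i. 1 \<le> i \<and> i \<le> q \<and> y \<in> ext F (layerB U F X t (i - 1)) U"
proof (induction q)
  case (Suc q)
  then show ?case
    by (cases "y \<in> layerB U F X t q") (auto intro: le_SucI exI[of _ "Suc q"])
qed simp

lemma lay_t_le_of_mem_layerB: "y \<in> layerB U F X t q \<Longrightarrow> y \<noteq> t \<Longrightarrow> lay_t U F X t y \<le> q"
  using layerB_entered lay_t_le order_trans by metis

lemma choose'_spec:
  assumes "finite (ext F X A)" "ext F X A \<noteq> {}"
  shows "choose' U F X A \<in> ext F X A \<and>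
    (\<forall>z \<in> ext F X A. (lay U F X (choose' U F X A), choose' U F X A) \<le> (lay U F X z, z))"
proof -
  define g where "g y = (lay U F X y, y)" for y
  have "Min (g ` ext F X A) \<in> g ` ext F X A"
    using assms by (intro Min_in) auto
  then obtain y where y: "y \<in> ext F X A" "g y = Min (g ` ext F X A)" by auto
  then have least: "\<forall>z \<in> ext F X A. g y \<le> g z"
    using assms(1) by simp
  have less: "g y < g z" if "z \<in> ext F X A" "z \<noteq> y" for z
    using least that by (auto simp: g_def order.strict_iff_order)
  have "choose' U F X A = y"
    unfolding choose'_def lexless_iff g_def[symmetric]
  proof (rule the_equality)
    fix y' assume "y' \<in> ext F X A \<and> (\<forall>z \<in> ext F X A. z \<noteq> y' \<longrightarrow> g y' < g z)"
    then show "y' = y" using less y(1) less_asym by blast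
  qed (use y(1) less in blast)
  then show ?thesis using y(1) least unfolding g_def by simp
qed

lemma first_difference:
  assumes "\<not> set xs \<subseteq> set ys" "\<not> set ys \<subseteq> set xs"
  shows "\<exists>k < min (length xs) (length ys). take k xs = take k ys \<and> xs ! k \<noteq> ys ! k"
proof -
  define m where "m = min (length xs) (length ys)"
  have "\<exists>k < m. xs ! k \<noteq> ys ! k"
  proof (rule ccontr)
    assume "\<not> ?thesis"
    then have "take m xs = take m ys" by (intro nth_equalityI) (auto simp: m_def)
    then have "set xs \<subseteq> set ys \<or> set ys \<subseteq> set xs"
      unfolding m_def by (metis min.cobounded1 min.cobounded2 min_def set_take_subset take_all)
    with assms show False by blast
  qed
  then obtain k where k: "k < m" "xs ! k \<noteq> ys ! k" "\<forall>i < k. xs ! i = ys ! i"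
    using exists_least_iff[of "\<lambda>k. k < m \<and> xs ! k \<noteq> ys ! k"] by (metis less_trans)
  then have "take k xs = take k ys" by (intro nth_equalityI) (auto simp: m_def)
  with k show ?thesis unfolding m_def by blast
qed

locale commutable_system =
  fixes U :: "int set" and F :: "int set set"
  assumes set_system: "set_system U F"
    and strongly_accessible: "strongly_accessible F"
    and commutable: "commutable F"
begin

lemma finite_U: "finite U"
  using set_system by (simp add: set_system_def)

lemma subset_U: "X \<in> F \<Longrightarrow> X \<subseteq> U"
  using set_system by (auto simp: set_system_def)

lemma finite_member: "X \<in> F \<Longrightarrow> finite X"
  using subset_U finite_U finite_subset by blast

lemma empty_member: "{} \<in> F"
  using set_system by (simp add: set_system_def)

lemma strongly_accessibleD: "X \<in> F \<Longrightarrow> Y \<in> F \<Longrightarrow> X \<subset> Y \<Longrightarrow> \<exists>z\<in>Y - X. insert z X \<in> F"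
  using strongly_accessible by (auto simp: strongly_accessible_def)

lemma commutableD:
  "X \<in> F \<Longrightarrow> Y \<in> F \<Longrightarrow> X \<noteq> {} \<Longrightarrow> X \<subset> Y \<Longrightarrow> a \<in> Y - X \<Longrightarrow> b \<in> Y - X
    \<Longrightarrow> insert a X \<in> F \<Longrightarrow> insert b X \<in> F \<Longrightarrow> X \<union> {a, b} \<in> F"
  using commutable unfolding commutable_def by blast

lemma ext_nonempty: "X \<in> F \<Longrightarrow> Y \<in> F \<Longrightarrow> X \<subset> Y \<Longrightarrow> ext F X Y \<noteq> {}"
  using strongly_accessibleD by (fastforce simp: ext_def)

text \<open>Grow \<open>A\<close> towards \<open>B\<close> one element at a time by strong accessibility; the commutable
  property keeps \<open>y\<close> addable at every step.\<close>
lemma insert_lift: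
  assumes "A \<in> F" "A \<noteq> {}" "A \<subseteq> B" "B \<in> F" "B \<subseteq> Z" "Z \<in> F" "y \<in> Z" "y \<notin> B"
    and "insert y A \<in> F"
  shows "insert y B \<in> F"
  using assms
proof (induction "card (B - A)" arbitrary: A)
  case 0
  then have "B - A = {}" using finite_member[of B] by simp
  with 0 have "A = B" by blast
  with 0 show ?case by simp
next
  case (Suc n)
  then have "A \<subset> B" by auto
  then obtain a where a: "a \<in> B - A" "insert a A \<in> F" using strongly_accessibleD Suc.prems(1,4) by blast
  have "A \<subset> Z" "a \<in> Z - A" "y \<in> Z - A"
    using \<open>A \<subset> B\<close> a Suc.prems by auto
  then have "A \<union> {a, y} \<in> F"
    using commutableD[OF Suc.prems(1,6,2)] a(2) Suc.prems(9) by blast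
  then have "insert y (insert a A) \<in> F" by (simp add: insert_commute)
  moreover have "B - insert a A = (B - A) - {a}" by blast
  then have "n = card (B - insert a A)"
    using Suc.hyps(2) a(1) finite_member[OF Suc.prems(4)] by (simp add: card_Diff_singleton)
  moreover have "insert a A \<subseteq> B" using Suc.prems(3) a by blast
  ultimately show ?case
    using Suc.hyps(1)[of "insert a A"] a(2) Suc.prems(4-8) by blast
qed

lemma layerB_member:
  assumes X: "X \<in> F" and t: "t \<in> X" "{t} \<in> F"
  shows "layerB U F X t i \<in> F"
proof (induction i)
  case 0
  then show ?case using t by simp
next
  case (Suc i)
  let ?B = "layerB U F X t i"
  have "E \<subseteq> ext F ?B U \<inter> X \<Longrightarrow> ?B \<union> E \<in> F" if "finite E" for E
    using that
  proof (induction E rule: finite_induct)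
    case (insert e E)
    have "insert e (?B \<union> E) \<in> F"
    proof (rule insert_lift[OF Suc.IH _ _ _ _ X])
      show "?B \<noteq> {}" using start_in_layerB[of t U F X i] by blast
      show "?B \<union> E \<in> F" "?B \<union> E \<subseteq> X" "e \<in> X" "e \<notin> ?B \<union> E" "insert e ?B \<in> F"
        using insert layerB_subset[OF t(1), of U F i] by (auto simp: ext_def)
    qed simp
    then show ?case by simp
  qed (use Suc.IH in simp)
  then show ?case using finite_member[OF X] by simp
qed

lemma layerB_saturates:
  assumes X: "X \<in> F" and t: "t \<in> X" "{t} \<in> F"
  shows "\<exists>q. layerB U F X t q = X"
proof (rule ccontr)
  assume "\<nexists>q. layerB U F X t q = X"
  then have proper: "layerB U F X t q \<subset> X" for q
    using layerB_subset[OF t(1)] by blast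
  have finite: "finite (layerB U F X t q)" for q
    by (rule finite_subset[OF layerB_subset[OF t(1)] finite_member[OF X]])
  have "q < card (layerB U F X t q)" for q
  proof (induction q)
    case 0
    show ?case using finite by (simp add: card_gt_0_iff)
  next
    case (Suc q)
    obtain z where "z \<in> X - layerB U F X t q" "insert z (layerB U F X t q) \<in> F"
      using strongly_accessibleD[OF layerB_member[OF X t] X proper] by blast
    then have "insert z (layerB U F X t q) \<subseteq> layerB U F X t (Suc q)" "z \<notin> layerB U F X t q"
      using subset_U[OF X] by (auto simp: ext_def)
    then have "Suc (card (layerB U F X t q)) \<le> card (layerB U F X t (Suc q))"
      using card_mono[OF finite] card_insert_disjoint[OF finite] by metis
    with Suc.IH show ?case by simp
  qed
  moreover have "card (layerB U F X t (card X)) \<le> card X"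
    using card_mono[OF finite_member[OF X] layerB_subset[OF t(1)]] .
  ultimately show False using leD by blast
qed

lemma lay_t_spec:
  assumes "X \<in> F" "t \<in> X" "{t} \<in> F" "y \<in> X \<union> ext F X U" "y \<noteq> t"
  shows "1 \<le> lay_t U F X t y \<and> y \<in> ext F (layerB U F X t (lay_t U F X t y - 1)) U"
proof -
  obtain q where q: "layerB U F X t q = X" using layerB_saturates assms by blast
  have "\<exists>i. 1 \<le> i \<and> y \<in> ext F (layerB U F X t (i - 1)) U"
  proof (cases "y \<in> X")
    case True
    then show ?thesis using layerB_entered[of y U F X t q] q assms(5) by auto
  next
    case False
    then show ?thesis using q assms(4) by (intro exI[of _ "Suc q"]) auto
  qed
  then show ?thesis using lay_t_LeastI[OF assms(5)] by blast
qed

lemma layerB_transfer: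
  assumes X: "X \<in> F" and Y: "Y \<in> F" and Z: "Z \<in> F" and t: "t \<in> X" "t \<in> Y" "{t} \<in> F"
    and "Y \<subseteq> Z" "y \<in> Z"
    and sub: "layerB U F X t q \<subseteq> layerB U F Y t q" and y: "y \<in> ext F (layerB U F X t q) U"
  shows "y \<in> layerB U F Y t q \<or> y \<in> ext F (layerB U F Y t q) U"
proof (cases "y \<in> layerB U F Y t q")
  case notin: False
  have "insert y (layerB U F Y t q) \<in> F"
  proof (rule insert_lift[OF layerB_member[OF X t(1,3)] _ sub layerB_member[OF Y t(2,3)] _ Z])
    show "layerB U F X t q \<noteq> {}" using start_in_layerB[of t U F X q] by blast
    show "layerB U F Y t q \<subseteq> Z" using layerB_subset[OF t(2), of U F q] \<open>Y \<subseteq> Z\<close> by blast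
    show "insert y (layerB U F X t q) \<in> F" using y by (simp add: ext_def)
  qed (use notin \<open>y \<in> Z\<close> in auto)
  then show ?thesis
    using notin y by (simp add: ext_def)
qed simp

lemma layerB_subset_layerB:
  assumes X: "X \<in> F" and Y: "Y \<in> F" and t: "t \<in> X" "{t} \<in> F" and "X \<subseteq> Y"
  shows "layerB U F X t q \<subseteq> layerB U F Y t q"
proof (induction q)
  case (Suc q)
  have tY: "t \<in> Y" using t \<open>X \<subseteq> Y\<close> by blast
  show ?case
  proof
    fix y assume "y \<in> layerB U F X t (Suc q)"
    then consider "y \<in> layerB U F X t q" | "y \<in> ext F (layerB U F X t q) U" "y \<in> X" by auto
    then show "y \<in> layerB U F Y t (Suc q)"
    proof cases
      case 2
      then have "y \<in> Y" using \<open>X \<subseteq> Y\<close> by blast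
      then show ?thesis using layerB_transfer[OF X Y Y t(1) tY t(2) order_refl _ Suc.IH 2(1)] by auto
    qed (use Suc.IH in auto)
  qed
qed simp

lemma layerB_subset_layerB_of_subset:
  assumes X: "X \<in> F" and Y: "Y \<in> F" and t: "t \<in> X" "{t} \<in> F" and "X \<subseteq> Y"
  shows "layerB U F Y t q \<subseteq> X \<Longrightarrow> layerB U F Y t q \<subseteq> layerB U F X t q"
proof (induction q)
  case (Suc q)
  have tY: "t \<in> Y" using t \<open>X \<subseteq> Y\<close> by blast
  have IH: "layerB U F Y t q \<subseteq> layerB U F X t q"
    using Suc by auto
  show ?case
  proof
    fix y assume y: "y \<in> layerB U F Y t (Suc q)"
    then have "y \<in> X" using Suc.prems by blast
    from y consider "y \<in> layerB U F Y t q" | "y \<in> ext F (layerB U F Y t q) U" by auto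
    then show "y \<in> layerB U F X t (Suc q)"
    proof cases
      case 2
      then show ?thesis
        using layerB_transfer[OF Y X X tY t(1) t(2) order_refl \<open>y \<in> X\<close> IH 2] \<open>y \<in> X\<close> by auto
    qed (use IH in auto)
  qed
qed simp

lemma lay_t_le_of_subset:
  assumes X: "X \<in> F" and Y: "Y \<in> F" and Z: "Z \<in> F" and t: "t \<in> X" "{t} \<in> F"
    and "X \<subseteq> Y" "Y \<subseteq> Z" "y \<in> Z" "y \<noteq> t"
    and "1 \<le> c" and y: "y \<in> ext F (layerB U F X t (c - 1)) U"
  shows "lay_t U F Y t y \<le> c"
proof -
  have "t \<in> Y" using t \<open>X \<subseteq> Y\<close> by blast
  then have "y \<in> layerB U F Y t (c - 1) \<or> y \<in> ext F (layerB U F Y t (c - 1)) U"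
    using layerB_transfer[OF X Y Z t(1) _ t(2)] layerB_subset_layerB[OF X Y t \<open>X \<subseteq> Y\<close>] assms(7,8) y
    by blast
  then show ?thesis
    using lay_t_le_of_mem_layerB[of y U F Y t "c - 1"] lay_t_le[of y t c] assms(9,10) by auto
qed

text \<open>The witness is taken from the first layer of \<open>Y\<close> that is not contained in \<open>X\<close>.\<close>
lemma layerB_escape:
  assumes X: "X \<in> F" and Y: "Y \<in> F" and t: "t \<in> X" "{t} \<in> F" and "X \<subseteq> Y"
    and escape: "\<not> layerB U F Y t r \<subseteq> X"
  shows "\<exists>w \<in> layerB U F Y t r - X. insert w X \<in> F \<and> lay_t U F X t w \<le> r"
proof -
  define i where "i = (LEAST i. \<not> layerB U F Y t i \<subseteq> X)"
  have i: "\<not> layerB U F Y t i \<subseteq> X" "i \<le> r"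
    unfolding i_def using escape by (metis LeastI, metis Least_le)
  then obtain i' where i': "i = Suc i'"
    using t(1) by (cases i) auto
  have inside: "layerB U F Y t i' \<subseteq> X"
    using not_less_Least[of i' "\<lambda>i. \<not> layerB U F Y t i \<subseteq> X"] i' unfolding i_def by auto
  obtain w where w: "w \<in> layerB U F Y t i" "w \<notin> X" using i(1) by blast
  then have wY: "w \<in> ext F (layerB U F Y t i') U" "w \<in> Y" using inside i' by auto
  have tY: "t \<in> Y" using t \<open>X \<subseteq> Y\<close> by blast
  have "w \<in> ext F (layerB U F X t i') U"
    using layerB_transfer[OF Y X Y tY t(1) t(2) \<open>X \<subseteq> Y\<close> wY(2)
        layerB_subset_layerB_of_subset[OF X Y t \<open>X \<subseteq> Y\<close> inside] wY(1)]
      layerB_subset[OF t(1), of U F i'] w(2)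
    by blast
  moreover have "w \<noteq> t" using w(2) t(1) by blast
  ultimately have "lay_t U F X t w \<le> r"
    using lay_t_le[of w t "Suc i'" F U X] i' i(2) by simp
  moreover have "insert w X \<in> F"
  proof (rule insert_lift[OF layerB_member[OF Y tY t(2)] _ inside X \<open>X \<subseteq> Y\<close> Y wY(2) w(2)])
    show "layerB U F Y t i' \<noteq> {}" using start_in_layerB[of t U F Y i'] by blast
    show "insert w (layerB U F Y t i') \<in> F" using wY(1) by (simp add: ext_def)
  qed
  moreover have "w \<in> layerB U F Y t r" using w(1) layerB_mono[OF i(2)] by blast
  ultimately show ?thesis using w(2) by blast
qed

lemma exists_ext_lay_t_le:
  assumes X: "X \<in> F" and Y: "Y \<in> F" and Z: "Z \<in> F" and t: "t \<in> X" "{t} \<in> F"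
    and "X \<subseteq> Y" "X \<subseteq> Z" "z \<in> Z" "z \<notin> X"
    and "1 \<le> b" and z: "z \<in> ext F (layerB U F Y t (b - 1)) U"
  shows "\<exists>v \<in> insert z (layerB U F Y t (b - 1)) - X.
           insert v X \<in> F \<and> (lay_t U F X t v, v) \<le> (b, z)"
proof (cases "layerB U F Y t (b - 1) \<subseteq> X")
  case True
  have tY: "t \<in> Y" using t \<open>X \<subseteq> Y\<close> by blast
  have sub: "layerB U F Y t (b - 1) \<subseteq> layerB U F X t (b - 1)"
    using layerB_subset_layerB_of_subset[OF X Y t \<open>X \<subseteq> Y\<close> True] .
  have "z \<in> ext F (layerB U F X t (b - 1)) U"
    using layerB_transfer[OF Y X Z tY t(1) t(2) \<open>X \<subseteq> Z\<close> \<open>z \<in> Z\<close> sub z]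
      layerB_subset[OF t(1), of U F "b - 1"] \<open>z \<notin> X\<close>
    by blast
  then have "lay_t U F X t z \<le> b"
    using lay_t_le[of z t b] \<open>1 \<le> b\<close> \<open>z \<notin> X\<close> t(1) by auto
  moreover have "insert z X \<in> F"
  proof (rule insert_lift[OF layerB_member[OF Y tY t(2)] _ True X \<open>X \<subseteq> Z\<close> Z \<open>z \<in> Z\<close> \<open>z \<notin> X\<close>])
    show "layerB U F Y t (b - 1) \<noteq> {}" using start_in_layerB[of t U F Y "b - 1"] by blast
    show "insert z (layerB U F Y t (b - 1)) \<in> F" using z by (simp add: ext_def)
  qed
  ultimately show ?thesis using \<open>z \<notin> X\<close> by auto
next
  case False
  then obtain w where "w \<in> layerB U F Y t (b - 1) - X" "insert w X \<in> F" "lay_t U F X t w \<le> b - 1"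
    using layerB_escape[OF X Y t \<open>X \<subseteq> Y\<close>] by blast
  moreover have "lay_t U F X t w < b" using calculation(3) \<open>1 \<le> b\<close> by linarith
  ultimately show ?thesis by auto
qed

lemma source_spec: "S \<in> F \<Longrightarrow> S \<noteq> {} \<Longrightarrow> source F S \<in> S \<and> {source F S} \<in> F"
proof -
  assume S: "S \<in> F" "S \<noteq> {}"
  then obtain z where "z \<in> S" "{z} \<in> F" using strongly_accessibleD[OF empty_member S(1)] by auto
  then have "S \<inter> singles F \<noteq> {}" by (auto simp: singles_def)
  then have "Min (S \<inter> singles F) \<in> S \<inter> singles F"
    using finite_member[OF S(1)] by (intro Min_in) auto
  then show ?thesis by (simp add: source_def singles_def)
qed

lemma complete'_induct:
  assumes "X0 \<in> F" "P X0"
    and step: "\<And>X. X \<in> F \<Longrightarrow> P X \<Longrightarrow> ext F X U \<noteq> {} \<Longrightarrow> P (insert (choose' U F X U) X)"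
  shows "complete' U F X0 U \<in> F \<and> ext F (complete' U F X0 U) U = {} \<and> P (complete' U F X0 U)"
  unfolding complete'_def
proof (rule while_rule[where P = "\<lambda>X. X \<in> F \<and> P X" and r = "measure (\<lambda>X. card (U - X))"])
  fix X assume X: "X \<in> F \<and> P X" "ext F X U \<noteq> {}"
  then have c: "choose' U F X U \<in> ext F X U"
    using choose'_spec[OF finite_ext[OF finite_U]] by blast
  then show "insert (choose' U F X U) X \<in> F \<and> P (insert (choose' U F X U) X)"
    using step X by (auto simp: ext_def)
  have "card (U - insert (choose' U F X U) X) < card (U - X)"
    using c finite_U by (intro psubset_card_mono) (auto simp: ext_def)
  then show "(insert (choose' U F X U) X, X) \<in> measure (\<lambda>X. card (U - X))" by simp
qed (use assms(1,2) in auto)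

lemma complete'_maximal:
  assumes "X0 \<in> F"
  shows "maximal_sol F (complete' U F X0 U) \<and> X0 \<subseteq> complete' U F X0 U"
proof -
  let ?T = "complete' U F X0 U"
  have T: "?T \<in> F" "ext F ?T U = {}" "X0 \<subseteq> ?T"
    using complete'_induct[OF assms, of "\<lambda>X. X0 \<subseteq> X"] by auto
  have "\<not> ?T \<subset> Y" if "Y \<in> F" for Y
    using ext_nonempty[OF T(1) that] T(2) subset_U[OF that] by (auto simp: ext_def)
  with T show ?thesis by (simp add: maximal_sol_def)
qed

lemma complete'_leaves:
  assumes "X0 \<in> F" "X0 \<subseteq> W" "\<not> complete' U F X0 U \<subseteq> W"
  shows "\<exists>X \<in> F. X0 \<subseteq> X \<and> X \<subseteq> W \<and> ext F X U \<noteq> {} \<and> choose' U F X U \<notin> W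
           \<and> insert (choose' U F X U) X \<subseteq> complete' U F X0 U"
proof -
  define leaves where "leaves X \<longleftrightarrow> (\<exists>X' \<in> F. X0 \<subseteq> X' \<and> X' \<subseteq> W \<and> ext F X' U \<noteq> {}
      \<and> choose' U F X' U \<notin> W \<and> insert (choose' U F X' U) X' \<subseteq> X)" for X
  have "leaves (complete' U F X0 U) \<or> complete' U F X0 U \<subseteq> W"
  proof (rule complete'_induct[OF assms(1), of "\<lambda>X. X0 \<subseteq> X \<and> (leaves X \<or> X \<subseteq> W)", THEN conjunct2,
        THEN conjunct2, THEN conjunct2])
    fix X assume X: "X \<in> F" "X0 \<subseteq> X \<and> (leaves X \<or> X \<subseteq> W)" "ext F X U \<noteq> {}"
    let ?X = "insert (choose' U F X U) X"
    have "leaves X \<Longrightarrow> leaves ?X" unfolding leaves_def by blast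
    moreover have "leaves ?X \<or> ?X \<subseteq> W" if "X \<subseteq> W"
      using that X unfolding leaves_def by (cases "choose' U F X U \<in> W") auto
    ultimately show "X0 \<subseteq> ?X \<and> (leaves ?X \<or> ?X \<subseteq> W)" using X(2) by blast
  qed (use assms(2) in blast)
  then show ?thesis using assms(3) unfolding leaves_def by blast
qed

context
  fixes S assumes S: "S \<in> F" "S \<noteq> {}"
begin

lemma canon_prefix_Suc_of_subset:
  assumes "1 \<le> n" "set (canon_prefix U F S n) \<in> F" "set (canon_prefix U F S n) \<subset> S"
  shows "canon_prefix U F S (Suc n) = canon_prefix U F S n @ [choose' U F (set (canon_prefix U F S n)) S]
    \<and> choose' U F (set (canon_prefix U F S n)) S \<in> ext F (set (canon_prefix U F S n)) S"
proof -
  have ne: "ext F (set (canon_prefix U F S n)) S \<noteq> {}"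
    using ext_nonempty[OF assms(2) S(1) assms(3)] .
  then have "canon_prefix U F S (Suc n) = canon_prefix U F S n @ [choose' U F (set (canon_prefix U F S n)) S]"
    using assms(1) by (cases n) (auto simp: Let_def)
  then show ?thesis
    using choose'_spec[OF finite_ext[OF finite_member[OF S(1)]] ne] by blast
qed

lemma canon_prefix_invariant:
  "1 \<le> n \<Longrightarrow> n \<le> card S \<Longrightarrow> length (canon_prefix U F S n) = n \<and> distinct (canon_prefix U F S n)
    \<and> set (canon_prefix U F S n) \<in> F \<and> set (canon_prefix U F S n) \<subseteq> S \<and> canon_prefix U F S n ! 0 = source F S"
proof (induction n)
  case (Suc n)
  show ?case
  proof (cases "n = 0")
    case True
    then show ?thesis using source_spec[OF S] by simp
  next
    case False
    with Suc have IH: "length (canon_prefix U F S n) = n" "distinct (canon_prefix U F S n)"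
      "set (canon_prefix U F S n) \<in> F" "set (canon_prefix U F S n) \<subseteq> S"
      "canon_prefix U F S n ! 0 = source F S"
      by auto
    then have "card (set (canon_prefix U F S n)) < card S"
      using Suc.prems(2) by (simp add: distinct_card)
    then have "set (canon_prefix U F S n) \<subset> S" using IH(4) by auto
    with IH False show ?thesis
      using canon_prefix_Suc_of_subset[of n] by (auto simp: ext_def nth_append)
  qed
qed simp

lemma canon_prefix_Suc:
  assumes "1 \<le> n" "n < card S"
  shows "canon_prefix U F S (Suc n) = canon_prefix U F S n @ [choose' U F (set (canon_prefix U F S n)) S]
    \<and> choose' U F (set (canon_prefix U F S n)) S \<in> ext F (set (canon_prefix U F S n)) S"
proof (rule canon_prefix_Suc_of_subset[OF assms(1)])
  have "length (canon_prefix U F S n) = n" "distinct (canon_prefix U F S n)"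
    "set (canon_prefix U F S n) \<subseteq> S"
    using canon_prefix_invariant assms by auto
  then show "set (canon_prefix U F S n) \<subset> S"
    using assms(2) distinct_card by fastforce
qed (use canon_prefix_invariant assms in auto)

lemma take_canon_prefix: "i \<le> n \<Longrightarrow> n \<le> card S \<Longrightarrow> take i (canon_prefix U F S n) = canon_prefix U F S i"
proof (induction n)
  case (Suc n)
  show ?case
  proof (cases "i = Suc n")
    case True
    then show ?thesis using canon_prefix_invariant[of "Suc n"] Suc.prems by simp
  next
    case False
    then have "i \<le> n" using Suc.prems by simp
    show ?thesis
    proof (cases "n = 0")
      case False
      then have "canon_prefix U F S (Suc n) = canon_prefix U F S n @ [choose' U F (set (canon_prefix U F S n)) S]"
        "length (canon_prefix U F S n) = n"
        using canon_prefix_Suc[of n] canon_prefix_invariant[of n] Suc.prems by auto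
      then show ?thesis using Suc.IH \<open>i \<le> n\<close> Suc.prems by simp
    qed (use \<open>i \<le> n\<close> in simp)
  qed
qed simp

lemma length_canon_order: "length (canon_order U F S) = card S"
  and canon_order_0: "canon_order U F S ! 0 = source F S"
  using canon_prefix_invariant[of "card S"] finite_member[OF S(1)] S(2)
  unfolding canon_order_def by (auto simp: Suc_le_eq card_gt_0_iff)

lemma take_canon_order: "i \<le> card S \<Longrightarrow> take i (canon_order U F S) = canon_prefix U F S i"
  unfolding canon_order_def by (rule take_canon_prefix) auto

lemma set_take_canon_order:
  assumes "i \<le> card S"
  shows "set (take i (canon_order U F S)) \<in> F \<and> set (take i (canon_order U F S)) \<subseteq> S"
proof (cases "i = 0")
  case False
  then show ?thesis using take_canon_order canon_prefix_invariant assms by simp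
qed (simp add: empty_member)

lemma set_canon_order: "set (canon_order U F S) = S"
proof -
  have "set (canon_order U F S) \<subseteq> S" "distinct (canon_order U F S)"
    using canon_prefix_invariant[of "card S"] finite_member[OF S(1)] S(2)
    unfolding canon_order_def by (auto simp: Suc_le_eq card_gt_0_iff)
  then show ?thesis
    using length_canon_order finite_member[OF S(1)] by (simp add: card_subset_eq distinct_card)
qed

lemma canon_order_nth:
  assumes "1 \<le> i" "i < card S"
  shows "canon_order U F S ! i = choose' U F (set (take i (canon_order U F S))) S
    \<and> canon_order U F S ! i \<in> ext F (set (take i (canon_order U F S))) S"
proof -
  have "canon_order U F S ! i = take (Suc i) (canon_order U F S) ! i" by simp
  then show ?thesis
    using take_canon_order[of i] take_canon_order[of "Suc i"] canon_prefix_Suc[OF assms]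
      canon_prefix_invariant[of i] assms
    by (simp add: nth_append)
qed

lemma source_mem_take_canon_order: "1 \<le> j \<Longrightarrow> j \<le> card S \<Longrightarrow> source F S \<in> set (take j (canon_order U F S))"
  using canon_order_0 length_canon_order by (metis le_trans less_le_trans nth_mem nth_take
      length_take min.absorb2 zero_less_one)

text \<open>So the pairs compared by \<open>prec'\<close> are exactly the keys that \<open>choose'\<close> minimised while
  building the canonical order.\<close>
lemma lay_t_canon_order_nth:
  assumes "1 \<le> i" "i < card S"
  shows "lay_t U F S (canon_order U F S ! 0) (canon_order U F S ! i)
     = lay U F (set (take i (canon_order U F S))) (canon_order U F S ! i)"
proof -
  define W where "W = set (take i (canon_order U F S))"
  define c where "c = canon_order U F S ! i"
  define t where "t = source F S"
  have t: "t \<in> S" "{t} \<in> F" using source_spec[OF S] t_def by auto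
  have W: "W \<in> F" "W \<subseteq> S" using set_take_canon_order assms W_def by auto
  have tW: "t \<in> W" using source_mem_take_canon_order assms t_def W_def by simp
  have layW: "lay U F W = lay_t U F W t"
    using source_subset[OF finite_member[OF S(1)] W(2)] tW t unfolding lay_def t_def by auto
  have c: "c = choose' U F W S" "c \<in> ext F W S" using canon_order_nth[OF assms] c_def W_def by auto
  then have cS: "c \<in> S" "c \<notin> W" "c \<noteq> t" "c \<in> ext F W U" using subset_U[OF S(1)] tW by (auto simp: ext_def)
  define e where "e = lay_t U F W t c"
  define d where "d = lay_t U F S t c"
  have e: "1 \<le> e" "c \<in> ext F (layerB U F W t (e - 1)) U"
    using lay_t_spec[OF W(1) tW t(2) _ cS(3)] cS(4) e_def by auto
  have d: "1 \<le> d" "c \<in> ext F (layerB U F S t (d - 1)) U"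
    using lay_t_spec[OF S(1) t _ cS(3)] cS(1) d_def by auto
  have "d \<le> e"
    using lay_t_le_of_subset[OF W(1) S(1) S(1) tW t(2) W(2) order_refl cS(1,3) e] d_def by simp
  moreover have "e \<le> d"
  proof -
    obtain v where v: "v \<in> insert c (layerB U F S t (d - 1)) - W" "insert v W \<in> F"
        "(lay_t U F W t v, v) \<le> (d, c)"
      using exists_ext_lay_t_le[OF W(1) S(1) S(1) tW t(2) W(2) W(2) cS(1,2) d] by blast
    then have "v \<in> ext F W S" using layerB_subset[OF t(1), of U F "d - 1"] cS(1) by (auto simp: ext_def)
    then have "(e, c) \<le> (lay_t U F W t v, v)"
      using choose'_spec[of F W S U, OF finite_ext[OF finite_member[OF S(1)]]] c
      unfolding layW e_def by blast
    then have "(e, c) \<le> (d, c)" using v(3) by (rule order_trans)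
    then show ?thesis by auto
  qed
  ultimately show ?thesis
    using canon_order_0 layW t_def d_def e_def c_def W_def by simp
qed

lemma ord_pair_0: "ord_pair U F S 0 = (0, source F S)"
  using canon_order_0 by (simp add: ord_pair_def lay_t_def)

lemma ord_pair_nth:
  "1 \<le> i \<Longrightarrow> i < card S \<Longrightarrow>
    ord_pair U F S i = (lay U F (set (take i (canon_order U F S))) (canon_order U F S ! i), canon_order U F S ! i)"
  using lay_t_canon_order_nth by (simp add: ord_pair_def Let_def)

end

lemma prec'_intro:
  assumes S: "S \<in> F" "S \<noteq> {}" and T: "T \<in> F" "T \<noteq> {}" and "T \<noteq> S"
    and k: "k < min (card T) (card S)" "take k (canon_order U F T) = take k (canon_order U F S)"
    and less: "lexless (ord_pair U F T k) (ord_pair U F S k)"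
  shows "prec' U F T S"
proof -
  have "ord_pair U F T i = ord_pair U F S i" if "i < k" for i
  proof -
    have same: "canon_order U F T ! i = canon_order U F S ! i"
      using that k(2) by (metis nth_take)
    show ?thesis
    proof (cases "i = 0")
      case True
      then show ?thesis using same ord_pair_0[OF S] ord_pair_0[OF T] canon_order_0[OF S] canon_order_0[OF T]
        by simp
    next
      case False
      have "take i (canon_order U F T) = take i (canon_order U F S)"
        using that k(2) by (metis min.strict_order_iff take_take)
      then show ?thesis using False that k(1) same ord_pair_nth[OF S, of i] ord_pair_nth[OF T, of i] by simp
    qed
  qed
  then show ?thesis
    unfolding prec'_def using assms length_canon_order[OF S] length_canon_order[OF T] by auto
qed

text \<open>Look at the step where the completion first leaves \<open>W\<close>, from some \<open>X \<subseteq> W\<close>: it picks an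
  element at least as good as the one \<open>exists_ext_lay_t_le\<close> provides for \<open>z\<close>, and passing from
  \<open>X\<close> to the larger \<open>W\<close> can only lower its layer.\<close>
lemma complete'_extends_below:
  assumes X0: "X0 \<in> F" "X0 \<subseteq> W" and W: "W \<in> F" "W \<subseteq> complete' U F X0 U"
    and t: "source F W \<in> X0" "{source F W} \<in> F"
    and z: "z \<in> ext F W U" and leaves: "\<not> complete' U F X0 U \<subseteq> W"
  shows "\<exists>y \<in> ext F W (complete' U F X0 U). (lay U F W y, y) \<le> (lay U F W z, z)"
proof -
  define T where "T = complete' U F X0 U"
  define t where "t = source F W"
  have TF: "T \<in> F" using complete'_maximal[OF X0(1)] by (simp add: T_def maximal_sol_def)
  obtain X where X: "X \<in> F" "X0 \<subseteq> X" "X \<subseteq> W" "ext F X U \<noteq> {}"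
      and y: "choose' U F X U \<notin> W" "insert (choose' U F X U) X \<subseteq> T"
    using complete'_leaves[OF X0 leaves] T_def by blast
  define y where "y = choose' U F X U"
  have tX: "t \<in> X" using t X(2) t_def by blast
  have tW: "t \<in> W" using tX X(3) by blast
  have layX: "lay U F X = lay_t U F X t"
    using source_subset[OF finite_member[OF W(1)] X(3)] tX t unfolding lay_def t_def by auto
  have layW: "lay U F W = lay_t U F W t" unfolding lay_def t_def ..
  have yX: "y \<in> ext F X U" "\<forall>v \<in> ext F X U. (lay_t U F X t y, y) \<le> (lay_t U F X t v, v)"
    using choose'_spec[of F X U U, OF finite_ext[OF finite_U] X(4)] unfolding layX y_def by blast+
  define b where "b = lay_t U F W t z"
  have zW: "z \<notin> W" "z \<noteq> t" "insert z W \<in> F" "z \<in> U" using z tW by (auto simp: ext_def)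
  have b: "1 \<le> b" "z \<in> ext F (layerB U F W t (b - 1)) U"
    using lay_t_spec[OF W(1) tW t(2)[folded t_def] _ zW(2)] z b_def by auto
  obtain v where v: "v \<in> insert z (layerB U F W t (b - 1)) - X" "insert v X \<in> F"
      "(lay_t U F X t v, v) \<le> (b, z)"
    using exists_ext_lay_t_le[OF X(1) W(1) zW(3) tX t(2)[folded t_def] X(3) _ insertI1 _ b] X(3) zW(1)
    by blast
  then have "v \<in> ext F X U"
    using layerB_subset[OF tW, of U F "b - 1"] subset_U[OF W(1)] zW(4) by (auto simp: ext_def)
  then have yz: "(lay_t U F X t y, y) \<le> (b, z)" using yX(2) v(3) by (blast intro: order_trans)
  have yT: "y \<in> T" "y \<notin> W" "y \<noteq> t" using y y_def tW by auto
  have "1 \<le> lay_t U F X t y \<and> y \<in> ext F (layerB U F X t (lay_t U F X t y - 1)) U"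
    using lay_t_spec[OF X(1) tX t(2)[folded t_def] _ yT(3)] yX(1) by auto
  then have "lay_t U F W t y \<le> lay_t U F X t y"
    using lay_t_le_of_subset[OF X(1) W(1) TF tX t(2)[folded t_def] X(3) W(2)[folded T_def] yT(1,3)]
    by blast
  moreover have "insert y W \<in> F"
  proof (rule insert_lift[OF X(1) _ X(3) W(1) W(2)[folded T_def] TF yT(1,2)])
    show "X \<noteq> {}" using tX by blast
    show "insert y X \<in> F" using yX(1) by (simp add: ext_def)
  qed
  ultimately show ?thesis
    using yT yz layW b_def T_def by (intro bexI[of _ y]) (auto simp: ext_def)
qed

lemma complete'_prefix_set:
  assumes "S \<in> F" "S \<noteq> {}" "1 \<le> j" "j \<le> card S"
  shows "maximal_sol F (complete' U F (prefix_set U F S j) U)"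
    and "prefix_set U F S j \<subseteq> complete' U F (prefix_set U F S j) U"
    and "complete' U F (prefix_set U F S j) U \<noteq> {}"
  using complete'_maximal[of "prefix_set U F S j"] set_take_canon_order[OF assms(1,2,4)]
    source_mem_take_canon_order[OF assms]
  unfolding prefix_set_def by auto

text \<open>If the element \<open>z\<close> that \<open>S\<close> picks after the common prefix \<open>W\<close> lies in \<open>T\<close>, then \<open>T\<close>
  could pick it too. Otherwise \<open>W\<close> contains \<open>S[j]\<close> and the completion \<open>T\<close> must leave \<open>W\<close>.\<close>
lemma ord_pair_complete'_less:
  assumes Smax: "maximal_sol F S" "S \<noteq> {}" and j: "1 \<le> j" "j \<le> card S"
    and T: "T = complete' U F (prefix_set U F S j) U" "T \<noteq> S"
    and k: "1 \<le> k" "k < card T" "k < card S"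
    and common: "take k (canon_order U F T) = take k (canon_order U F S)"
    and differ: "canon_order U F T ! k \<noteq> canon_order U F S ! k"
  shows "lexless (ord_pair U F T k) (ord_pair U F S k)"
proof -
  have S: "S \<in> F" using Smax by (simp add: maximal_sol_def)
  note Tmax = complete'_prefix_set(1-3)[OF S Smax(2) j, folded T(1)]
  have TF: "T \<in> F" using Tmax(1) by (simp add: maximal_sol_def)
  define W where "W = set (take k (canon_order U F S))"
  define z where "z = canon_order U F S ! k"
  define x where "x = canon_order U F T ! k"
  have W: "W \<in> F" "W \<subseteq> S" "W \<subseteq> T"
    using set_take_canon_order[OF S Smax(2)] set_take_canon_order[OF TF Tmax(3)] k common
    unfolding W_def by (metis less_imp_le)+
  have z: "z = choose' U F W S" "z \<in> ext F W S"
    using canon_order_nth[OF S Smax(2) k(1,3)] unfolding W_def z_def by auto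
  have x: "x = choose' U F W T" "x \<in> ext F W T"
    using canon_order_nth[OF TF Tmax(3) k(1,2)] unfolding W_def x_def common by auto
  have "\<exists>y \<in> ext F W T. (lay U F W y, y) \<le> (lay U F W z, z)"
  proof (cases "z \<in> T")
    case True
    then show ?thesis using z(2) by (auto simp: ext_def)
  next
    case False
    have "j \<le> k"
    proof (rule ccontr)
      assume "\<not> j \<le> k"
      then have "z \<in> prefix_set U F S j"
        using k(3) length_canon_order[OF S Smax(2)] unfolding z_def prefix_set_def
        by (metis in_set_conv_nth length_take min.absorb2 nth_take not_le j(2))
      then show False using False Tmax(2) by blast
    qed
    then have "prefix_set U F S j \<subseteq> W"
      unfolding prefix_set_def W_def by (rule set_take_subset_set_take)
    moreover have "\<not> T \<subseteq> W"
      using Tmax(1) W(1,2) T(2) S unfolding maximal_sol_def by blast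
    moreover have "source F W = source F S"
      using source_subset[OF finite_member[OF S] W(2)] source_spec[OF S Smax(2)]
        source_mem_take_canon_order[OF S Smax(2) k(1)] k(3) unfolding W_def by simp
    moreover have "z \<in> ext F W U" using z(2) subset_U[OF S] by (auto simp: ext_def)
    ultimately show ?thesis
      using complete'_extends_below[of "prefix_set U F S j" W z] set_take_canon_order[OF S Smax(2) j(2)]
        source_mem_take_canon_order[OF S Smax(2) j] source_spec[OF S Smax(2)] W(1,3) T(1)
      unfolding prefix_set_def by auto
  qed
  then have "(lay U F W x, x) \<le> (lay U F W z, z)"
    using choose'_spec[of F W T U, OF finite_ext[OF finite_member[OF TF]]] x
    by (blast intro: order_trans)
  moreover have "x \<noteq> z" using differ x_def z_def by simp
  ultimately have "(lay U F W x, x) < (lay U F W z, z)" by auto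
  then show ?thesis
    using ord_pair_nth[OF S Smax(2) k(1,3)] ord_pair_nth[OF TF Tmax(3) k(1,2)] common
    unfolding lexless_iff W_def x_def z_def by simp
qed

lemma complete'_prefix_prec':
  assumes Smax: "maximal_sol F S" "S \<noteq> {}" and j: "1 \<le> j" "j \<le> card S"
    and T: "T = complete' U F (prefix_set U F S j) U" "T \<noteq> S"
  shows "prec' U F T S"
proof -
  have S: "S \<in> F" using Smax by (simp add: maximal_sol_def)
  note Tmax = complete'_prefix_set(1-3)[OF S Smax(2) j, folded T(1)]
  have TF: "T \<in> F" using Tmax(1) by (simp add: maximal_sol_def)
  have "\<not> T \<subseteq> S" "\<not> S \<subseteq> T"
    using Smax(1) Tmax(1) TF S T(2) unfolding maximal_sol_def by blast+
  then obtain k where k: "k < min (card T) (card S)"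
      "take k (canon_order U F T) = take k (canon_order U F S)"
      "canon_order U F T ! k \<noteq> canon_order U F S ! k"
    using first_difference[of "canon_order U F T" "canon_order U F S"]
    by (auto simp: set_canon_order[OF S Smax(2)] set_canon_order[OF TF Tmax(3)]
        length_canon_order[OF S Smax(2)] length_canon_order[OF TF Tmax(3)])
  have "lexless (ord_pair U F T k) (ord_pair U F S k)"
  proof (cases "k = 0")
    case True
    have "source F S \<in> T"
      using Tmax(2) source_mem_take_canon_order[OF S Smax(2) j] unfolding prefix_set_def by blast
    then have "source F T \<le> source F S"
      using source_le[OF finite_member[OF TF]] source_spec[OF S Smax(2)] by blast
    moreover have "source F T \<noteq> source F S"
      using k(3) True canon_order_0[OF S Smax(2)] canon_order_0[OF TF Tmax(3)] by simp
    ultimately show ?thesis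
      using True ord_pair_0[OF S Smax(2)] ord_pair_0[OF TF Tmax(3)] by (simp add: lexless_def)
  next
    case False
    then show ?thesis using ord_pair_complete'_less[OF Smax j T] k by simp
  qed
  then show ?thesis using prec'_intro[OF S Smax(2) TF Tmax(3) T(2) k(1,2)] by blast
qed

end

theorem mainTheorem7:
  fixes U :: "int set" and F :: "int set set" and S :: "int set" and j :: nat
  assumes "set_system U F"
    and "strongly_accessible F"
    and "commutable F"
    and "maximal_sol F S" and "S \<noteq> {}"
    and "1 \<le> j" and "j \<le> card S"
  shows "maximal_sol F (complete' U F (prefix_set U F S j) U)
         \<and> preceq' U F (complete' U F (prefix_set U F S j) U) S"
proof -
  interpret commutable_system U F
    using assms(1-3) by unfold_locales
  have S: "S \<in> F" using assms(4) by (simp add: maximal_sol_def)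
  show ?thesis
    using complete'_prefix_set(1)[OF S assms(5-7)] complete'_prefix_prec'[OF assms(4-7) refl]
    unfolding preceq'_def by blast
qed

end
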